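(* Let $\gamma<0$, $1\le p<\infty$, and let $L^p_\gamma(\mathbb{R})=L^p(\mathbb{R},(1+e^x)^\gamma dx)$. For every nonnegative $f\in L^p_\gamma(\mathbb{R})$, $$\liminf_{h\to-\infty}\|f+\tau_hf\|_{L^p_\gamma(\mathbb{R})}\ge2^{1/p}\|f\|_{L^p_\gamma(\mathbb{R})},$$ where $\tau_hf(x)=f(x-h)$. *)

theory Defs
  imports "HOL-Analysis.Analysis"
begin

definition lp_weight :: "real \<Rightarrow> real \<Rightarrow> real" where
  "lp_weight \<gamma> x = (1 + exp x) powr \<gamma>"

definition wLp_integral :: "real \<Rightarrow> real \<Rightarrow> (real \<Rightarrow> real) \<Rightarrow> ennreal" where
  "wLp_integral \<gamma> p f = (\<integral>\<^sup>+ x. ennreal (\<bar>f x\<bar> powr p * lp_weight \<gamma> x) \<partial>lebesgue)"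

definition wLp_norm :: "real \<Rightarrow> real \<Rightarrow> (real \<Rightarrow> real) \<Rightarrow> ereal" where
  "wLp_norm \<gamma> p f =
     (if wLp_integral \<gamma> p f = \<infinity> then \<infinity>
      else ereal (enn2real (wLp_integral \<gamma> p f) powr (1 / p)))"

definition transl :: "real \<Rightarrow> (real \<Rightarrow> real) \<Rightarrow> real \<Rightarrow> real" where
  "transl h f x = f (x - h)"

end

theory Submission
  imports Defs
begin

text \<open>
  For \<open>h \<le> 0\<close> the translate \<open>\<tau>\<^sub>h f\<close> moves the mass of \<open>f\<close> from \<open>y\<close> to \<open>y + h \<le> y\<close>,
  where the decreasing weight \<open>(1 + e\<^sup>x)\<^sup>\<gamma>\<close> is larger, so its weighted \<open>p\<close>-th power
  integral is at least that of \<open>f\<close>. Together with \<open>a\<^sup>p + b\<^sup>p \<le> (a + b)\<^sup>p\<close> for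
  \<open>a, b \<ge> 0\<close>, this gives \<open>\<integral> (f + \<tau>\<^sub>h f)\<^sup>p w \<ge> 2 \<integral> f\<^sup>p w\<close> for every
  \<open>h \<le> 0\<close>, which is stronger than the claimed bound on the lower limit.
\<close>

lemma powr_superadditive:
  fixes a b p :: real
  assumes "0 \<le> a" "0 \<le> b" "1 \<le> p"
  shows "a powr p + b powr p \<le> (a + b) powr p"
proof (cases "a + b = 0")
  case True
  with assms have "a = 0" "b = 0" by auto
  then show ?thesis by simp
next
  case False
  define s where "s = a + b"
  have s: "s > 0" using False assms s_def by auto
  have shrink: "x powr p \<le> s powr p * (x / s)" if "0 \<le> x" "x \<le> s" for x
  proof -
    have "x powr p = s powr p * (x / s) powr p"
      using s that by (simp add: powr_mult[symmetric])
    also have "\<dots> \<le> s powr p * (x / s)"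
      using s that powr_mono'[OF assms(3), of "x / s"] by (intro mult_left_mono) auto
    finally show ?thesis .
  qed
  have "a powr p + b powr p \<le> s powr p * (a / s) + s powr p * (b / s)"
    using shrink[of a] shrink[of b] assms s_def by (intro add_mono) auto
  also have "\<dots> = s powr p"
    using s by (simp add: s_def add_divide_distrib[symmetric] distrib_left[symmetric])
  finally show ?thesis by (simp add: s_def)
qed

lemma one_add_exp_pos [simp]: "0 < 1 + exp (x :: real)"
  using exp_gt_zero[of x] by linarith

lemmas one_add_exp_neq_zero [simp] = one_add_exp_pos[THEN dual_order.strict_implies_not_eq]

lemma lp_weight_pos: "lp_weight \<gamma> x > 0"
  unfolding lp_weight_def by simp

lemma lp_weight_antimono:
  assumes "\<gamma> < 0" "x \<le> y"
  shows "lp_weight \<gamma> y \<le> lp_weight \<gamma> x"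
  unfolding lp_weight_def using assms
  by (intro powr_mono2') auto

lemma lp_weight_measurable [measurable]: "lp_weight \<gamma> \<in> borel_measurable lebesgue"
proof -
  have "continuous_on UNIV (lp_weight \<gamma>)"
    unfolding lp_weight_def by (intro continuous_intros) auto
  then show ?thesis
    using borel_measurable_continuous_onI measurable_completion measurable_lborel2 by metis
qed

lemma lebesgue_measurable_add_const [measurable]: "(\<lambda>x::real. x + c) \<in> lebesgue \<rightarrow>\<^sub>M lebesgue"
  using lebesgue_affine_measurable[where c = "\<lambda>_::real. 1" and t = c] by (simp add: add.commute)

lemma measurable_lebesgue_transl [measurable]:
  assumes [measurable]: "f \<in> borel_measurable lebesgue"
  shows "transl h f \<in> borel_measurable lebesgue"
  using measurable_compose[OF lebesgue_measurable_add_const[of "- h"] assms]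
  by (simp add: transl_def [abs_def] o_def)

lemma nn_integral_lebesgue_transl:
  fixes g :: "real \<Rightarrow> ennreal"
  assumes "g \<in> borel_measurable lebesgue"
  shows "(\<integral>\<^sup>+x. g (x - h) \<partial>lebesgue) = (\<integral>\<^sup>+x. g x \<partial>lebesgue)"
  using nn_integral_real_affine_lebesgue[OF assms, of 1 "- h"] by simp

lemma wLp_integral_le_transl:
  assumes "\<gamma> < 0" "h \<le> 0" and [measurable]: "f \<in> borel_measurable lebesgue"
  shows "wLp_integral \<gamma> p f \<le> wLp_integral \<gamma> p (transl h f)"
proof -
  have "wLp_integral \<gamma> p f \<le> (\<integral>\<^sup>+y. ennreal (\<bar>f y\<bar> powr p * lp_weight \<gamma> (y + h)) \<partial>lebesgue)"
    unfolding wLp_integral_def using assms lp_weight_antimono[of \<gamma> "y + h" y for y]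
    by (intro nn_integral_mono ennreal_leI mult_left_mono) auto
  also have "\<dots> = (\<integral>\<^sup>+x. ennreal (\<bar>f (x - h)\<bar> powr p * lp_weight \<gamma> (x - h + h)) \<partial>lebesgue)"
    by (rule nn_integral_lebesgue_transl[symmetric]) measurable
  also have "\<dots> = wLp_integral \<gamma> p (transl h f)"
    by (simp add: wLp_integral_def transl_def)
  finally show ?thesis .
qed

lemma wLp_integral_superadditive:
  assumes "1 \<le> p"
    and [measurable]: "f \<in> borel_measurable lebesgue" "g \<in> borel_measurable lebesgue"
    and "\<And>x. f x \<ge> 0" "\<And>x. g x \<ge> 0"
  shows "wLp_integral \<gamma> p f + wLp_integral \<gamma> p g \<le> wLp_integral \<gamma> p (\<lambda>x. f x + g x)"
proof -
  have "wLp_integral \<gamma> p f + wLp_integral \<gamma> p g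
      = (\<integral>\<^sup>+x. ennreal (f x powr p * lp_weight \<gamma> x) + ennreal (g x powr p * lp_weight \<gamma> x) \<partial>lebesgue)"
    unfolding wLp_integral_def using assms(4,5) by (subst nn_integral_add) auto
  also have "\<dots> \<le> wLp_integral \<gamma> p (\<lambda>x. f x + g x)"
    unfolding wLp_integral_def
  proof (intro nn_integral_mono)
    fix x
    have f: "f x \<ge> 0" and g: "g x \<ge> 0" and w: "lp_weight \<gamma> x > 0"
      using assms(4,5) lp_weight_pos by auto
    have "ennreal (f x powr p * lp_weight \<gamma> x) + ennreal (g x powr p * lp_weight \<gamma> x)
        = ennreal ((f x powr p + g x powr p) * lp_weight \<gamma> x)"
      using w by (simp add: distrib_right)
    also have "\<dots> \<le> ennreal (\<bar>f x + g x\<bar> powr p * lp_weight \<gamma> x)"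
      using powr_superadditive[OF f g assms(1)] f g w by (intro ennreal_leI) simp
    finally show "ennreal (f x powr p * lp_weight \<gamma> x) + ennreal (g x powr p * lp_weight \<gamma> x)
        \<le> ennreal (\<bar>f x + g x\<bar> powr p * lp_weight \<gamma> x)" .
  qed
  finally show ?thesis .
qed

lemma wLp_norm_le_if_scaled_integral_le:
  assumes "0 < p" "0 \<le> c" "wLp_integral \<gamma> p f < \<infinity>"
    and "ennreal c * wLp_integral \<gamma> p f \<le> wLp_integral \<gamma> p g"
  shows "ereal (c powr (1 / p)) * wLp_norm \<gamma> p f \<le> wLp_norm \<gamma> p g"
proof (cases "wLp_integral \<gamma> p g = \<infinity>")
  case True
  then show ?thesis unfolding wLp_norm_def by simp
next
  case False
  define I J where "I = enn2real (wLp_integral \<gamma> p f)" and "J = enn2real (wLp_integral \<gamma> p g)"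
  have I: "wLp_integral \<gamma> p f = ennreal I" "0 \<le> I"
    using assms(3) by (auto simp: I_def ennreal_enn2real_if)
  have J: "wLp_integral \<gamma> p g = ennreal J" "0 \<le> J"
    using False by (auto simp: J_def ennreal_enn2real_if)
  have "c * I \<le> J"
    using assms(2,4) I J by (simp add: ennreal_mult[symmetric])
  then have "(c * I) powr (1 / p) \<le> J powr (1 / p)"
    using assms(1,2) I by (intro powr_mono2) auto
  then show ?thesis
    using False I J assms(2) unfolding wLp_norm_def by (simp add: powr_mult)
qed

theorem lemma8p1:
  fixes \<gamma> p :: real and f :: "real \<Rightarrow> real"
  assumes "\<gamma> < 0" and "1 \<le> p"
    and "f \<in> borel_measurable lebesgue"
    and "\<And>x. f x \<ge> 0"
    and "wLp_integral \<gamma> p f < \<infinity>"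
  shows "Liminf at_bot (\<lambda>h. wLp_norm \<gamma> p (\<lambda>x. f x + transl h f x))
           \<ge> ereal (2 powr (1 / p)) * wLp_norm \<gamma> p f"
proof (rule Liminf_bounded)
  have "ereal (2 powr (1 / p)) * wLp_norm \<gamma> p f \<le> wLp_norm \<gamma> p (\<lambda>x. f x + transl h f x)"
    if "h \<le> 0" for h
  proof (rule wLp_norm_le_if_scaled_integral_le)
    have "ennreal 2 * wLp_integral \<gamma> p f = wLp_integral \<gamma> p f + wLp_integral \<gamma> p f"
      by (simp add: mult_2)
    also have "\<dots> \<le> wLp_integral \<gamma> p f + wLp_integral \<gamma> p (transl h f)"
      using wLp_integral_le_transl[OF assms(1) that assms(3)] by (rule add_left_mono)
    also have "\<dots> \<le> wLp_integral \<gamma> p (\<lambda>x. f x + transl h f x)"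
      using assms(2,3,4) by (intro wLp_integral_superadditive) (auto simp: transl_def)
    finally show "ennreal 2 * wLp_integral \<gamma> p f \<le> wLp_integral \<gamma> p (\<lambda>x. f x + transl h f x)" .
  qed (use assms in auto)
  then show "\<forall>\<^sub>F h in at_bot. ereal (2 powr (1 / p)) * wLp_norm \<gamma> p f
      \<le> wLp_norm \<gamma> p (\<lambda>x. f x + transl h f x)"
    unfolding eventually_at_bot_linorder by blast
qed

end
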